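(* Consider the average-cost Markov decision process (MDP) described in the context, with finite state space $\mathcal{S}$ of TAoI values, action set $\mathcal{A}=\{(0,0),(0,1),(1,0),(1,1)\}$, per-step cost $\bar{R}(\Delta,\mathbf{a})=\Delta+\tfrac{1}{2}(L(\mathbf{a})-1)$ and transition probabilities $\bar{p}$. Let $(V^{*},V)$ solve the Bellman equation $$V^{*}+V(s)=\min_{\mathbf{a}\in\mathcal{A}}\Big\{\bar{R}(s,\mathbf{a})+\sum_{s'\in\mathcal{S}}\bar{p}(s'|s,\mathbf{a})V(s')\Big\},\quad \forall s\in\mathcal{S}.$$ Then the value function $V(\Delta)$ is non-decreasing in $\Delta\in\mathcal{S}$.
   Context: Parameters: positive integers $T_1^u<T_2^u$ (transmission latencies, in time slots, of a low- and high-resolution image) and $T_1^c<T_2^c$ (inference latencies of a small and a large language model); success probabilities $p_s,q_s,p_l,q_l\in(0,1]$ associated with actions $(0,0),(1,0),(0,1),(1,1)$ respectively (action $\mathbf{a}=(a^u,a^c)$: $a^u=0/1$ low/high resolution, $a^c=0/1$ small/large model). The duration of action $\mathbf{a}$ is $L((0,0))=T_1^u+T_1^c$, $L((1,0))=T_2^u+T_1^c$, $L((0,1))=T_1^u+T_2^c$, $L((1,1))=T_2^u+T_2^c$. Write $P(\mathbf{a})$ for the success probability of $\mathbf{a}$. The state (task-oriented age of information, TAoI) $\Delta$ takes values in a finite set $\mathcal{S}$ of positive integers bounded by a finite upper limit $\hat{\Delta}$. In the original semi-Markov model, from state $\Delta$ under action $\mathbf{a}$ the next state is $L(\mathbf{a})$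 with probability $P(\mathbf{a})$ and $\min\{\Delta+L(\mathbf{a}),\hat{\Delta}\}$ with probability $1-P(\mathbf{a})$; denote these probabilities $p(s'|s,\mathbf{a})$. The equivalent discrete-time MDP has the same state and action spaces, cost $\bar{R}(\Delta,\mathbf{a})=\Delta+\tfrac12(L(\mathbf{a})-1)$, and transition probabilities $\bar{p}(s'|s,\mathbf{a})=\frac{\epsilon}{L(\mathbf{a})}p(s'|s,\mathbf{a})$ for $s'\neq s$ and $\bar{p}(s|s,\mathbf{a})=1-\frac{\epsilon}{L(\mathbf{a})}\big(1-p(s|s,\mathbf{a})\big)$, where $\epsilon\in(0,\min_{\mathbf{a}}L(\mathbf{a})]$ is fixed. *)

theory Defs
  imports Main "HOL.Real"
begin

definition actions :: "(nat \<times> nat) set" where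
  "actions = {(0,0), (0,1), (1,0), (1,1)}"

definition dur :: "nat \<Rightarrow> nat \<Rightarrow> nat \<Rightarrow> nat \<Rightarrow> nat \<times> nat \<Rightarrow> nat" where
  "dur T1u T2u T1c T2c a =
     (if fst a = 0 then T1u else T2u) + (if snd a = 0 then T1c else T2c)"

definition succ_prob :: "real \<Rightarrow> real \<Rightarrow> real \<Rightarrow> real \<Rightarrow> nat \<times> nat \<Rightarrow> real" where
  "succ_prob ps qs pl ql a =
     (if a = (0,0) then ps else if a = (1,0) then qs else if a = (0,1) then pl else ql)"

definition trans_p :: "(nat \<times> nat \<Rightarrow> nat) \<Rightarrow> (nat \<times> nat \<Rightarrow> real) \<Rightarrow> nat
    \<Rightarrow> nat \<Rightarrow> nat \<times> nat \<Rightarrow> nat \<Rightarrow> real" where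
  "trans_p L P Dhat s a s' =
     (if s' = L a then P a else 0) + (if s' = min (s + L a) Dhat then 1 - P a else 0)"

definition trans_pbar :: "(nat \<times> nat \<Rightarrow> nat) \<Rightarrow> (nat \<times> nat \<Rightarrow> real) \<Rightarrow> nat \<Rightarrow> real
    \<Rightarrow> nat \<Rightarrow> nat \<times> nat \<Rightarrow> nat \<Rightarrow> real" where
  "trans_pbar L P Dhat eps s a s' =
     (if s' \<noteq> s then eps / real (L a) * trans_p L P Dhat s a s'
      else 1 - eps / real (L a) * (1 - trans_p L P Dhat s a s))"

definition cost_bar :: "(nat \<times> nat \<Rightarrow> nat) \<Rightarrow> nat \<Rightarrow> nat \<times> nat \<Rightarrow> real" where
  "cost_bar L s a = real s + (real (L a) - 1) / 2"

end

theory Submission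
  imports Defs
begin

text \<open>
  Let \<open>s \<le> t\<close> be states maximising the gap \<open>d = V s - V t\<close>, and let \<open>a\<close> be optimal at \<open>t\<close>.
  Comparing the Bellman equation at \<open>t\<close> with the Bellman inequality for \<open>a\<close> at \<open>s\<close>, the
  cost difference \<open>s - t\<close> is non-positive and the success state \<open>L a\<close> does not depend on the
  current state, while the failure states \<open>min (s + L a) Dhat \<le> min (t + L a) Dhat\<close> have gap at
  most \<open>d\<close>. This gives \<open>c a * d \<le> c a * (1 - P a) * d\<close> with \<open>c a = eps / L a > 0\<close>, hence
  \<open>P a * d \<le> 0\<close> and \<open>d \<le> 0\<close>.
\<close>

lemma finite_max_ordered_gap:
  fixes V :: "'s::linorder \<Rightarrow> real"
  assumes "finite S" "S \<noteq> {}"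
  obtains s t where "s \<in> S" "t \<in> S" "s \<le> t"
    "\<And>x y. x \<in> S \<Longrightarrow> y \<in> S \<Longrightarrow> x \<le> y \<Longrightarrow> V x - V y \<le> V s - V t"
proof -
  let ?pairs = "{(x, y) \<in> S \<times> S. x \<le> y}"
  let ?gaps = "(\<lambda>(x, y). V x - V y) ` ?pairs"
  have "finite ?gaps"
    using assms(1) by (auto intro: finite_subset[of _ "S \<times> S"])
  moreover have "?gaps \<noteq> {}"
    using assms(2) by auto
  ultimately have "Max ?gaps \<in> ?gaps" "\<forall>g\<in>?gaps. g \<le> Max ?gaps"
    by simp_all
  then show thesis
    using that by fastforce
qed

lemma mono_on_of_relative_bellman:
  fixes V :: "'s::linorder \<Rightarrow> real"
  assumes "finite S"
    and opt: "\<And>s a. s \<in> S \<Longrightarrow> a \<in> A \<Longrightarrow>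
      g \<le> r s a + c a * (P a * V (z a) + (1 - P a) * V (m s a) - V s)"
    and attained: "\<And>s. s \<in> S \<Longrightarrow> \<exists>a\<in>A.
      g = r s a + c a * (P a * V (z a) + (1 - P a) * V (m s a) - V s)"
    and r_mono: "\<And>s t a. s \<le> t \<Longrightarrow> a \<in> A \<Longrightarrow> r s a \<le> r t a"
    and m_mono: "\<And>s t a. s \<le> t \<Longrightarrow> a \<in> A \<Longrightarrow> m s a \<le> m t a"
    and m_closed: "\<And>s a. s \<in> S \<Longrightarrow> a \<in> A \<Longrightarrow> m s a \<in> S"
    and c_pos: "\<And>a. a \<in> A \<Longrightarrow> 0 < c a"
    and P_pos: "\<And>a. a \<in> A \<Longrightarrow> 0 < P a" and P_le_1: "\<And>a. a \<in> A \<Longrightarrow> P a \<le> 1"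
  shows "mono_on S V"
proof (cases "S = {}")
  case True
  then show ?thesis by (simp add: mono_on_def monotone_on_def)
next
  case False
  obtain s t where st: "s \<in> S" "t \<in> S" "s \<le> t"
    and max_gap: "\<And>x y. x \<in> S \<Longrightarrow> y \<in> S \<Longrightarrow> x \<le> y \<Longrightarrow> V x - V y \<le> V s - V t"
    using finite_max_ordered_gap[OF \<open>finite S\<close> False] by blast
  define d where "d = V s - V t"
  obtain a where a: "a \<in> A"
    and at_t: "g = r t a + c a * (P a * V (z a) + (1 - P a) * V (m t a) - V t)"
    using attained[OF st(2)] by blast
  have "c a * d \<le> r s a - r t a + c a * (1 - P a) * (V (m s a) - V (m t a))"
    using opt[OF st(1) a] at_t by (simp add: d_def algebra_simps)
  also have "\<dots> \<le> c a * (1 - P a) * d"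
  proof -
    have "V (m s a) - V (m t a) \<le> d"
      unfolding d_def using max_gap m_closed m_mono st a by blast
    then have "c a * (1 - P a) * (V (m s a) - V (m t a)) \<le> c a * (1 - P a) * d"
      using c_pos[OF a] P_le_1[OF a] by (intro mult_left_mono) auto
    then show ?thesis
      using r_mono[OF st(3) a] by linarith
  qed
  finally have "c a * (P a * d) \<le> 0"
    by (simp add: algebra_simps)
  then have "d \<le> 0"
    using c_pos[OF a] P_pos[OF a] by (simp add: mult_le_0_iff)
  then show ?thesis
    using max_gap unfolding d_def mono_on_def monotone_on_def by force
qed

lemma sum_trans_pbar_mult:
  fixes V :: "nat \<Rightarrow> real"
  assumes "finite S" "s \<in> S" "L a \<in> S" "min (s + L a) D \<in> S"
  shows "(\<Sum>s'\<in>S. trans_pbar L P D eps s a s' * V s') =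
    V s + eps / real (L a) * (P a * V (L a) + (1 - P a) * V (min (s + L a) D) - V s)"
proof -
  define c where "c = eps / real (L a)"
  define m where "m = min (s + L a) D"
  have pointwise: "trans_pbar L P D eps s a s' * V s' =
      (if s' = s then V s else 0) + c * ((if s' = L a then P a * V (L a) else 0)
        + (if s' = m then (1 - P a) * V m else 0) - (if s' = s then V s else 0))" for s'
    by (simp add: trans_pbar_def trans_p_def c_def m_def algebra_simps)
  have "(\<Sum>s'\<in>S. trans_pbar L P D eps s a s' * V s') =
      (\<Sum>s'\<in>S. if s' = s then V s else 0) + c * ((\<Sum>s'\<in>S. if s' = L a then P a * V (L a) else 0)
        + (\<Sum>s'\<in>S. if s' = m then (1 - P a) * V m else 0) - (\<Sum>s'\<in>S. if s' = s then V s else 0))"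
    unfolding pointwise by (simp add: sum.distrib sum_distrib_left sum_subtractf algebra_simps)
  also have "\<dots> = V s + c * (P a * V (L a) + (1 - P a) * V m - V s)"
    using assms by (simp add: m_def)
  finally show ?thesis by (simp add: c_def m_def)
qed

theorem lemma1:
  fixes T1u T2u T1c T2c Dhat :: nat
    and ps qs pl ql eps Vstar :: real
    and S :: "nat set"
    and V :: "nat \<Rightarrow> real"
  assumes "0 < T1u" "T1u < T2u" "0 < T1c" "T1c < T2c"
    and "0 < ps" "ps \<le> 1" "0 < qs" "qs \<le> 1" "0 < pl" "pl \<le> 1" "0 < ql" "ql \<le> 1"
    and "finite S" "S \<subseteq> {1..Dhat}"
    and "\<forall>s\<in>S. \<forall>a\<in>actions. dur T1u T2u T1c T2c a \<in> S
                 \<and> min (s + dur T1u T2u T1c T2c a) Dhat \<in> S"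
    and "0 < eps" "eps \<le> (MIN a\<in>actions. real (dur T1u T2u T1c T2c a))"
    and "\<forall>s\<in>S. Vstar + V s =
           (MIN a\<in>actions. cost_bar (dur T1u T2u T1c T2c) s a
              + (\<Sum>s'\<in>S. trans_pbar (dur T1u T2u T1c T2c) (succ_prob ps qs pl ql) Dhat eps s a s'
                           * V s'))"
  shows "\<forall>s\<in>S. \<forall>t\<in>S. s \<le> t \<longrightarrow> V s \<le> V t"
proof -
  define L where "L = dur T1u T2u T1c T2c"
  define P where "P = succ_prob ps qs pl ql"
  define Q where "Q s a = cost_bar L s a +
    eps / real (L a) * (P a * V (L a) + (1 - P a) * V (min (s + L a) Dhat) - V s)" for s a
  have bellman: "Min ((\<lambda>a. V s + Q s a) ` actions) = Vstar + V s" if "s \<in> S" for s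
  proof -
    have "V s + Q s a = cost_bar L s a + (\<Sum>s'\<in>S. trans_pbar L P Dhat eps s a s' * V s')"
      if "a \<in> actions" for a
      using assms(15) \<open>s \<in> S\<close> \<open>a \<in> actions\<close>
      by (simp add: sum_trans_pbar_mult[OF assms(13) \<open>s \<in> S\<close>] Q_def L_def)
    then show ?thesis
      using assms(18) that by (simp add: L_def P_def cong: image_cong)
  qed
  have actions: "finite actions" "actions \<noteq> {}"
    by (simp_all add: actions_def)
  have opt: "Vstar \<le> Q s a" if "s \<in> S" "a \<in> actions" for s a
    using bellman[OF that(1)] that(2) actions by (auto simp: Min_eq_iff)
  have attained: "\<exists>a\<in>actions. Vstar = Q s a" if "s \<in> S" for s
    using bellman[OF that] actions by (auto simp: Min_eq_iff)
  have "mono_on S V"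
    by (rule mono_on_of_relative_bellman[where A = actions and g = Vstar and r = "cost_bar L"
          and c = "\<lambda>a. eps / real (L a)" and P = P and z = L and m = "\<lambda>s a. min (s + L a) Dhat"])
      (use opt attained assms in \<open>auto simp: Q_def cost_bar_def L_def P_def dur_def succ_prob_def\<close>)
  then show ?thesis
    unfolding mono_on_def monotone_on_def .
qed

end
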